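(* Let $m\ge1$ and $n\ge 2$. The number of interval-closed sets $I$ of $[m]\times[n]$ such that for every $a\in[m]$ there is some $b$ with $(a,b)\in I$ equals the Narayana number \[N(n+m,n)=\frac{1}{n}\binom{n+m}{n-1}\binom{n+m-1}{n-1},\] which is also the number of order ideals of $[m]\times[n-1]\times[2]$; indeed these interval-closed sets are in bijection with the order ideals of $[m]\times[n-1]\times[2]$.
   Context: $[k]$ is the chain $1<\cdots<k$; products of chains carry the componentwise order. A subset $I$ of a poset is interval-closed if for all $x,y\in I$ and $z$ with $x\le z\le y$ we have $z\in I$. *)

theory Defs
  imports Complex_Main
begin

definition grid2 :: "nat \<Rightarrow> nat \<Rightarrow> (nat \<times> nat) set" where
  "grid2 m n = {1..m} \<times> {1..n}"

definition le2 :: "nat \<times> nat \<Rightarrow> nat \<times> nat \<Rightarrow> bool" where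
  "le2 p q \<longleftrightarrow> fst p \<le> fst q \<and> snd p \<le> snd q"

definition grid3 :: "nat \<Rightarrow> nat \<Rightarrow> nat \<Rightarrow> (nat \<times> nat \<times> nat) set" where
  "grid3 a b c = {1..a} \<times> {1..b} \<times> {1..c}"

definition le3 :: "nat \<times> nat \<times> nat \<Rightarrow> nat \<times> nat \<times> nat \<Rightarrow> bool" where
  "le3 p q \<longleftrightarrow> fst p \<le> fst q \<and> fst (snd p) \<le> fst (snd q) \<and> snd (snd p) \<le> snd (snd q)"

definition interval_closed :: "'a set \<Rightarrow> ('a \<Rightarrow> 'a \<Rightarrow> bool) \<Rightarrow> 'a set \<Rightarrow> bool" where
  "interval_closed P le I \<longleftrightarrow> I \<subseteq> P \<and>
     (\<forall>x\<in>I. \<forall>y\<in>I. \<forall>z\<in>P. le x z \<and> le z y \<longrightarrow> z \<in> I)"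

definition order_ideal :: "'a set \<Rightarrow> ('a \<Rightarrow> 'a \<Rightarrow> bool) \<Rightarrow> 'a set \<Rightarrow> bool" where
  "order_ideal P le J \<longleftrightarrow> J \<subseteq> P \<and> (\<forall>y\<in>J. \<forall>x\<in>P. le x y \<longrightarrow> x \<in> J)"

definition row_full_ics :: "nat \<Rightarrow> nat \<Rightarrow> (nat \<times> nat) set set" where
  "row_full_ics m n = {I. interval_closed (grid2 m n) le2 I \<and>
                          (\<forall>a\<in>{1..m}. \<exists>b. (a, b) \<in> I)}"

definition narayana :: "nat \<Rightarrow> nat \<Rightarrow> real" where
  "narayana N k = (1 / real k) * real (N choose (k - 1)) * real ((N - 1) choose (k - 1))"

end

theory Submission
  imports Defs
begin

text \<open>
  A row-full interval-closed set I of [m] \<times> [n] meets each row a in an interval [l_a, r_a], and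
  interval-closedness says exactly that l and r are weakly decreasing in a. So these sets are the
  chains of m such intervals. The same chains code the order ideals of [m] \<times> [n-1] \<times> [2]:
  row a of the ideal consists of the points below r_a at height 1 and below l_a at height 2.
  Choosing the first interval and recursing gives a double-sum recursion for the number of chains,
  solved by a 2 \<times> 2 determinant of binomial coefficients (hockey-stick identities), which on the
  diagonal equals the Narayana number.
\<close>

definition interval_chains :: "nat \<Rightarrow> nat \<Rightarrow> nat \<Rightarrow> (nat \<times> nat) list set" where
  "interval_chains m a b =
     {ps. length ps = m \<and> (\<forall>(x, y) \<in> set ps. 1 \<le> x \<and> x \<le> y \<and> x \<le> a \<and> y \<le> b)
          \<and> sorted_wrt (\<lambda>p q. le2 q p) ps}"

lemma Cons_in_interval_chains_iff:
  "(x, y) # ps \<in> interval_chains (Suc m) a b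
     \<longleftrightarrow> 1 \<le> x \<and> x \<le> y \<and> x \<le> a \<and> y \<le> b \<and> ps \<in> interval_chains m x y"
  by (auto simp: interval_chains_def le2_def)

lemma interval_chains_0: "interval_chains 0 a b = {[]}"
  by (auto simp: interval_chains_def)

lemma interval_chains_Suc:
  "interval_chains (Suc m) a b
     = (\<lambda>(p, ps). p # ps) ` (SIGMA p : (SIGMA x:{1..a}. {x..b}). interval_chains m (fst p) (snd p))"
    (is "_ = ?image")
proof (intro set_eqI iffI)
  fix qs assume "qs \<in> interval_chains (Suc m) a b"
  then obtain x y ps where "qs = (x, y) # ps"
    by (cases qs) (auto simp: interval_chains_def)
  with \<open>qs \<in> interval_chains (Suc m) a b\<close> show "qs \<in> ?image"
    by (force simp: Cons_in_interval_chains_iff)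
qed (auto simp: Cons_in_interval_chains_iff)

lemma finite_interval_chains: "finite (interval_chains m a b)"
proof (rule finite_subset)
  show "interval_chains m a b \<subseteq> {ps. set ps \<subseteq> {1..a} \<times> {1..b} \<and> length ps = m}"
    by (force simp: interval_chains_def)
qed (simp add: finite_lists_length_eq)

lemma card_interval_chains_Suc:
  "card (interval_chains (Suc m) a b) = (\<Sum>x=1..a. \<Sum>y=x..b. card (interval_chains m x y))"
proof -
  have "inj (\<lambda>(p :: nat \<times> nat, ps). p # ps)"
    by (auto intro: injI)
  then have "card (interval_chains (Suc m) a b)
               = card (SIGMA p : (SIGMA x:{1..a}. {x..b}). interval_chains m (fst p) (snd p))"
    unfolding interval_chains_Suc by (simp add: card_image inj_on_subset)
  also have "\<dots> = (\<Sum>p\<in>(SIGMA x:{1..a}. {x..b}). card (interval_chains m (fst p) (snd p)))"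
    by (simp add: card_SigmaI finite_interval_chains)
  also have "\<dots> = (\<Sum>x=1..a. \<Sum>y=x..b. card (interval_chains m x y))"
    by (simp add: sum.Sigma split_beta)
  finally show ?thesis .
qed

lemma interval_chains_nth:
  assumes "ps \<in> interval_chains m a b" "i < m"
  shows "1 \<le> fst (ps ! i) \<and> fst (ps ! i) \<le> snd (ps ! i) \<and> fst (ps ! i) \<le> a \<and> snd (ps ! i) \<le> b"
  using assms nth_mem[of i ps] by (auto simp: interval_chains_def split_beta)

lemma interval_chains_nth_antimono:
  assumes "ps \<in> interval_chains m a b" "i \<le> j" "j < m"
  shows "fst (ps ! j) \<le> fst (ps ! i) \<and> snd (ps ! j) \<le> snd (ps ! i)"
  using assms sorted_wrt_nth_less[of _ ps i j]
  by (cases "i = j") (auto simp: interval_chains_def le2_def)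

lemma map_upt_in_interval_chains:
  assumes "\<And>i. i \<in> {1..m} \<Longrightarrow> 1 \<le> fst (f i) \<and> fst (f i) \<le> snd (f i) \<and> fst (f i) \<le> a \<and> snd (f i) \<le> b"
    and "\<And>i j. 1 \<le> i \<Longrightarrow> i < j \<Longrightarrow> j \<le> m \<Longrightarrow> le2 (f j) (f i)"
  shows "map f [1..<Suc m] \<in> interval_chains m a b"
proof -
  have "sorted_wrt (\<lambda>i j. le2 (f j) (f i)) [1..<Suc m]"
    using sorted_wrt_upt[of 1 "Suc m"] by (rule sorted_wrt_mono_rel[rotated]) (use assms(2) in auto)
  then show ?thesis
    using assms(1) by (auto simp: interval_chains_def sorted_wrt_map split_beta)
qed

definition interval_chain_count :: "nat \<Rightarrow> nat \<Rightarrow> nat \<Rightarrow> int" where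
  "interval_chain_count m a b =
     int ((a + m - 1) choose m) * int ((b + m - 1) choose m)
     - int ((a + m - 1) choose (m + 1)) * int ((b + m - 1) choose b)"

lemma sum_choose_shifted_upper:
  assumes "1 \<le> x" "x \<le> Suc b"
  shows "(\<Sum>y=x..b. int ((y + m - 1) choose k))
           = int ((b + m) choose Suc k) - int ((x + m - 1) choose Suc k)"
proof -
  have "(\<Sum>y=x..b. int ((y + m - 1) choose k))
          = (\<Sum>y=x..b. int ((Suc y + m - 1) choose Suc k) - int ((y + m - 1) choose Suc k))"
  proof (rule sum.cong)
    fix y assume "y \<in> {x..b}"
    then have "Suc y + m - 1 = Suc (y + m - 1)" using assms(1) by simp
    then show "int ((y + m - 1) choose k)
                 = int ((Suc y + m - 1) choose Suc k) - int ((y + m - 1) choose Suc k)"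
      by (simp only: binomial_Suc_Suc)
  qed simp
  also have "\<dots> = int ((Suc b + m - 1) choose Suc k) - int ((x + m - 1) choose Suc k)"
    using assms(2) by (rule sum_Suc_diff)
  finally show ?thesis by simp
qed

lemma sum_choose_shifted_lower:
  assumes "1 \<le> x" "x \<le> Suc b"
  shows "(\<Sum>y=x..b. int ((y + m - 1) choose y))
           = int ((b + m) choose b) - int ((x + m - 1) choose m)"
proof -
  have "(\<Sum>y=x..b. int ((y + m - 1) choose y))
          = (\<Sum>y=x..b. int ((Suc y + m - 1) choose (Suc y - 1)) - int ((y + m - 1) choose (y - 1)))"
  proof (rule sum.cong)
    fix y assume "y \<in> {x..b}"
    then obtain z where "y = Suc z" using assms(1) by (cases y) auto
    then show "int ((y + m - 1) choose y)
                 = int ((Suc y + m - 1) choose (Suc y - 1)) - int ((y + m - 1) choose (y - 1))"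
      by simp
  qed simp
  also have "\<dots> = int ((Suc b + m - 1) choose (Suc b - 1)) - int ((x + m - 1) choose (x - 1))"
    using assms(2) by (rule sum_Suc_diff)
  also have "(x + m - 1) choose (x - 1) = (x + m - 1) choose m"
    using binomial_symmetric[of "x - 1" "x + m - 1"] assms(1) by simp
  finally show ?thesis by simp
qed

lemma interval_chain_count_0:
  "1 \<le> a \<Longrightarrow> 1 \<le> b \<Longrightarrow> interval_chain_count 0 a b = 1"
  by (simp add: interval_chain_count_def)

lemma interval_chain_count_Suc:
  assumes "1 \<le> a" "a \<le> b"
  shows "(\<Sum>x=1..a. \<Sum>y=x..b. interval_chain_count m x y) = interval_chain_count (Suc m) a b"
proof -
  have "(\<Sum>y=x..b. interval_chain_count m x y)
          = int ((x + m - 1) choose m) * int ((b + m) choose (m + 1))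
            - int ((x + m - 1) choose (m + 1)) * int ((b + m) choose b)"
    if "x \<in> {1..a}" for x
  proof -
    have split: "(\<Sum>y=x..b. interval_chain_count m x y)
            = int ((x + m - 1) choose m) * (\<Sum>y=x..b. int ((y + m - 1) choose m))
              - int ((x + m - 1) choose (m + 1)) * (\<Sum>y=x..b. int ((y + m - 1) choose y))"
      by (simp add: interval_chain_count_def sum_subtractf sum_distrib_left)
    have upper: "(\<Sum>y=x..b. int ((y + m - 1) choose m))
                     = int ((b + m) choose (m + 1)) - int ((x + m - 1) choose (m + 1))"
      using that assms sum_choose_shifted_upper[of x b m m] by simp
    have lower: "(\<Sum>y=x..b. int ((y + m - 1) choose y))
                     = int ((b + m) choose b) - int ((x + m - 1) choose m)"
      using that assms sum_choose_shifted_lower[of x b m] by simp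
    show ?thesis unfolding split upper lower by (simp add: algebra_simps)
  qed
  then have "(\<Sum>x=1..a. \<Sum>y=x..b. interval_chain_count m x y)
          = (\<Sum>x=1..a. int ((x + m - 1) choose m)) * int ((b + m) choose (m + 1))
            - (\<Sum>x=1..a. int ((x + m - 1) choose (m + 1))) * int ((b + m) choose b)"
    by (simp add: sum_subtractf sum_distrib_right)
  also have "\<dots> = int ((a + m) choose (m + 1)) * int ((b + m) choose (m + 1))
                  - int ((a + m) choose (m + 2)) * int ((b + m) choose b)"
    using assms sum_choose_shifted_upper[of 1 a m m] sum_choose_shifted_upper[of 1 a m "m + 1"]
    by (simp add: binomial_eq_0)
  finally show ?thesis by (simp add: interval_chain_count_def)
qed

lemma interval_chain_count_diagonal:
  assumes "1 \<le> n"
  shows "int n * interval_chain_count m n n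
           = int ((n + m) choose (n - 1)) * int ((n + m - 1) choose (n - 1))"
proof (cases m)
  case 0
  then show ?thesis
    using assms binomial_symmetric[of "n - 1" n] by (simp add: interval_chain_count_def binomial_eq_0)
next
  case (Suc q)
  obtain p where n: "n = Suc p" using assms by (cases n) auto
  define N where "N = p + q + 1"
  have absorb: "(N - k) * (N choose k) = Suc k * (N choose Suc k)" for k
    by (metis binomial_absorb_comp binomial_absorption)
  text \<open>Absorption expresses Y and Z through X, which turns the determinant X^2 - Y Z into
    X^2 (N + 1) / ((q + 2) n); the factor q + 2 is kept on the left to stay in the integers.\<close>
  define X Y Z W where "X = int (N choose (q + 1))" and "Y = int (N choose (q + 2))"
    and "Z = int (N choose q)" and "W = int (Suc N choose (q + 2))"
  have "(q + 2) * (N choose (q + 2)) = p * (N choose (q + 1))"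
    using absorb[of "q + 1"] by (simp add: N_def)
  then have Y: "int (q + 2) * Y = int p * X"
    unfolding X_def Y_def by (metis of_nat_mult)
  have "(p + 1) * (N choose q) = (q + 1) * (N choose (q + 1))"
    using absorb[of q] by (simp add: N_def)
  then have Z: "int (p + 1) * Z = int (q + 1) * X"
    unfolding X_def Z_def by (metis of_nat_mult)
  have W: "int (N + 1) * X = int (q + 2) * W"
    using Suc_times_binomial_eq[of N "q + 1"] unfolding X_def W_def
    by (metis Suc_eq_plus1 add_2_eq_Suc' mult.commute of_nat_mult)
  have "int (q + 2) * (int (p + 1) * (X * X - Y * Z))
          = int (q + 2) * int (p + 1) * X * X - (int (q + 2) * Y) * (int (p + 1) * Z)"
    by (simp add: algebra_simps)
  also have "\<dots> = (int (q + 2) * int (p + 1) - int p * int (q + 1)) * X * X"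
    unfolding Y Z by (simp add: algebra_simps)
  also have "\<dots> = int (N + 1) * X * X"
    by (simp add: N_def algebra_simps)
  also have "\<dots> = int (q + 2) * (W * X)"
    unfolding W by (simp add: algebra_simps)
  finally have "int (q + 2) * (int (p + 1) * (X * X - Y * Z)) = int (q + 2) * (W * X)" .
  then have "int (p + 1) * (X * X - Y * Z) = W * X" by simp
  moreover have "N choose n = N choose q" "Suc N choose p = Suc N choose (q + 2)" "N choose p = N choose (q + 1)"
    using binomial_symmetric[of n N] binomial_symmetric[of p "Suc N"] binomial_symmetric[of p N]
    unfolding N_def n by simp_all
  ultimately show ?thesis
    unfolding interval_chain_count_def X_def Y_def Z_def W_def N_def using n Suc by simp
qed

lemma card_interval_chains:
  "1 \<le> a \<Longrightarrow> a \<le> b \<Longrightarrow> int (card (interval_chains m a b)) = interval_chain_count m a b"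
proof (induction m arbitrary: a b)
  case 0
  then show ?case by (simp add: interval_chains_0 interval_chain_count_0)
next
  case (Suc m)
  have "int (card (interval_chains (Suc m) a b))
          = (\<Sum>x=1..a. \<Sum>y=x..b. int (card (interval_chains m x y)))"
    by (simp add: card_interval_chains_Suc)
  also have "\<dots> = (\<Sum>x=1..a. \<Sum>y=x..b. interval_chain_count m x y)"
    using Suc.IH by (intro sum.cong) auto
  also have "\<dots> = interval_chain_count (Suc m) a b"
    using Suc.prems by (rule interval_chain_count_Suc)
  finally show ?case .
qed

lemma finite_convex_eq_atLeastAtMost:
  fixes S :: "'a::linorder set"
  assumes "finite S" "S \<noteq> {}" "\<And>x y z. x \<in> S \<Longrightarrow> y \<in> S \<Longrightarrow> x \<le> z \<Longrightarrow> z \<le> y \<Longrightarrow> z \<in> S"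
  shows "S = {Min S..Max S}"
proof
  show "S \<subseteq> {Min S..Max S}"
    using assms(1) by (simp add: subset_iff)
  show "{Min S..Max S} \<subseteq> S"
    using assms(3)[OF Min_in[OF assms(1,2)] Max_in[OF assms(1,2)]] by auto
qed

lemma interval_closedD:
  "interval_closed P le I \<Longrightarrow> x \<in> I \<Longrightarrow> y \<in> I \<Longrightarrow> z \<in> P \<Longrightarrow> le x z \<Longrightarrow> le z y \<Longrightarrow> z \<in> I"
  unfolding interval_closed_def by blast

definition row_bounds :: "nat \<Rightarrow> (nat \<times> nat) set \<Rightarrow> (nat \<times> nat) list" where
  "row_bounds m I = map (\<lambda>a. (Min (I `` {a}), Max (I `` {a}))) [1..<Suc m]"

definition stacked_intervals :: "(nat \<times> nat) list \<Rightarrow> (nat \<times> nat) set" where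
  "stacked_intervals ps =
     {(a, b). a \<in> {1..length ps} \<and> b \<in> {fst (ps ! (a - 1))..snd (ps ! (a - 1))}}"

lemma length_row_bounds [simp]: "length (row_bounds m I) = m"
  by (simp add: row_bounds_def del: upt_Suc)

lemma nth_row_bounds: "i < m \<Longrightarrow> row_bounds m I ! i = (Min (I `` {Suc i}), Max (I `` {Suc i}))"
  by (simp add: row_bounds_def del: upt_Suc)

lemma row_full_ics_row:
  assumes "I \<in> row_full_ics m n" "a \<in> {1..m}"
  shows "I `` {a} \<subseteq> {1..n}" and "I `` {a} \<noteq> {}" and "finite (I `` {a})"
    and "I `` {a} = {Min (I `` {a})..Max (I `` {a})}"
proof -
  have closed: "interval_closed (grid2 m n) le2 I"
    using assms(1) by (simp add: row_full_ics_def)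
  then have "I \<subseteq> grid2 m n"
    by (simp add: interval_closed_def)
  then show sub: "I `` {a} \<subseteq> {1..n}"
    by (auto simp: grid2_def)
  show ne: "I `` {a} \<noteq> {}"
    using assms unfolding row_full_ics_def by blast
  show fin: "finite (I `` {a})"
    using sub by (rule finite_subset) simp
  show "I `` {a} = {Min (I `` {a})..Max (I `` {a})}"
  proof (rule finite_convex_eq_atLeastAtMost[OF fin ne])
    fix x y z assume xyz: "x \<in> I `` {a}" "y \<in> I `` {a}" "x \<le> z" "z \<le> y"
    have "(a, z) \<in> grid2 m n"
      using xyz sub assms(2) by (auto simp: grid2_def)
    with xyz show "z \<in> I `` {a}"
      using interval_closedD[OF closed, of "(a, x)" "(a, y)" "(a, z)"] by (simp add: le2_def)
  qed
qed

lemma row_full_ics_row_antimono: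
  assumes I: "I \<in> row_full_ics m n" and a: "a \<in> {1..m}" "a' \<in> {1..m}" "a \<le> a'"
  shows "Min (I `` {a'}) \<le> Min (I `` {a}) \<and> Max (I `` {a'}) \<le> Max (I `` {a})"
proof -
  define l r l' r' where "l = Min (I `` {a})" and "r = Max (I `` {a})"
    and "l' = Min (I `` {a'})" and "r' = Max (I `` {a'})"
  have row: "I `` {a} = {l..r}" "I `` {a'} = {l'..r'}"
    using row_full_ics_row(4)[OF I a(1)] row_full_ics_row(4)[OF I a(2)]
    unfolding l_def r_def l'_def r'_def .
  have ordered: "l \<le> r" "l' \<le> r'"
    using row row_full_ics_row(2)[OF I a(1)] row_full_ics_row(2)[OF I a(2)] by auto
  show ?thesis
  proof (cases "l \<le> r'")
    case True
    have closed: "interval_closed (grid2 m n) le2 I"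
      using I by (simp add: row_full_ics_def)
    have corners: "(a, l) \<in> I" "(a', r') \<in> I" and "{l..r'} \<subseteq> {1..n}"
      using row ordered row_full_ics_row(1)[OF I a(1)] row_full_ics_row(1)[OF I a(2)] by auto
    then have "(a', l) \<in> grid2 m n" "(a, r') \<in> grid2 m n"
      using True a by (auto simp: grid2_def)
    then have "(a', l) \<in> I" "(a, r') \<in> I"
      using interval_closedD[OF closed corners] True a(3) by (auto simp: le2_def)
    then have "l' \<le> l" "r' \<le> r"
      using row by auto
    then show ?thesis
      unfolding l_def r_def l'_def r'_def by simp
  next
    case False
    then show ?thesis
      using ordered unfolding l_def r_def l'_def r'_def by linarith
  qed
qed

lemma row_bounds_in_interval_chains:
  assumes I: "I \<in> row_full_ics m n"
  shows "row_bounds m I \<in> interval_chains m n n"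
  unfolding row_bounds_def
proof (rule map_upt_in_interval_chains, goal_cases)
  case (1 a)
  note row = row_full_ics_row[OF I 1]
  have "Min (I `` {a}) \<in> I `` {a}" "Max (I `` {a}) \<in> I `` {a}"
    using Min_in[OF row(3,2)] Max_in[OF row(3,2)] .
  moreover have "Min (I `` {a}) \<le> Max (I `` {a})"
    using Min_le[OF row(3) Max_in[OF row(3,2)]] .
  ultimately show ?case
    using row(1) by auto
next
  case (2 a a')
  then show ?case
    using row_full_ics_row_antimono[OF I, of a a'] by (simp add: le2_def)
qed

lemma stacked_intervals_in_row_full_ics:
  assumes ps: "ps \<in> interval_chains m n n"
  shows "stacked_intervals ps \<in> row_full_ics m n"
proof -
  have mem: "(a, b) \<in> stacked_intervals ps
               \<longleftrightarrow> a \<in> {1..m} \<and> fst (ps ! (a - 1)) \<le> b \<and> b \<le> snd (ps ! (a - 1))" for a b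
    using ps by (simp add: stacked_intervals_def interval_chains_def)
  note bound = interval_chains_nth[OF ps] and antimono = interval_chains_nth_antimono[OF ps]
  have sub: "stacked_intervals ps \<subseteq> grid2 m n"
  proof (rule subrelI)
    fix a b assume "(a, b) \<in> stacked_intervals ps"
    then have "a \<in> {1..m}" "fst (ps ! (a - 1)) \<le> b" "b \<le> snd (ps ! (a - 1))"
      by (simp_all add: mem)
    moreover have "a - 1 < m"
      using calculation(1) by auto
    ultimately show "(a, b) \<in> grid2 m n"
      using bound[of "a - 1"] by (simp add: grid2_def)
  qed
  have convex: "z \<in> stacked_intervals ps"
    if "x \<in> stacked_intervals ps" "y \<in> stacked_intervals ps" "z \<in> grid2 m n" "le2 x z" "le2 z y"
    for x y z
  proof -
    obtain a1 b1 a2 b2 c d where xyz: "x = (a1, b1)" "y = (a2, b2)" "z = (c, d)"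
      by (metis prod.exhaust)
    have "a1 \<in> {1..m}" "a2 \<in> {1..m}" "c \<in> {1..m}" "a1 \<le> c" "c \<le> a2"
      and "fst (ps ! (a1 - 1)) \<le> d" "d \<le> snd (ps ! (a2 - 1))"
      using that unfolding xyz by (auto simp: mem grid2_def le2_def)
    moreover have "fst (ps ! (c - 1)) \<le> fst (ps ! (a1 - 1))" "snd (ps ! (a2 - 1)) \<le> snd (ps ! (c - 1))"
      using antimono[of "a1 - 1" "c - 1"] antimono[of "c - 1" "a2 - 1"] calculation by auto
    ultimately show ?thesis
      unfolding xyz mem by simp
  qed
  have "\<exists>b. (a, b) \<in> stacked_intervals ps" if "a \<in> {1..m}" for a
    using that bound[of "a - 1"] by (auto simp: mem)
  with sub convex show ?thesis
    unfolding row_full_ics_def interval_closed_def by blast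
qed

lemma stacked_intervals_row_bounds:
  assumes I: "I \<in> row_full_ics m n"
  shows "stacked_intervals (row_bounds m I) = I"
proof (rule set_eqI)
  fix z :: "nat \<times> nat"
  obtain a b where z: "z = (a, b)" by fastforce
  have mem: "(a, b) \<in> stacked_intervals (row_bounds m I)
               \<longleftrightarrow> a \<in> {1..m} \<and> b \<in> {Min (I `` {a})..Max (I `` {a})}"
    by (cases a) (auto simp: stacked_intervals_def nth_row_bounds)
  show "z \<in> stacked_intervals (row_bounds m I) \<longleftrightarrow> z \<in> I"
  proof (cases "a \<in> {1..m}")
    case True
    then show ?thesis
      unfolding z mem using row_full_ics_row(4)[OF I True] by blast
  next
    case False
    moreover have "I \<subseteq> grid2 m n"
      using I by (simp add: row_full_ics_def interval_closed_def)
    ultimately show ?thesis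
      unfolding z mem by (auto simp: grid2_def)
  qed
qed

lemma row_bounds_stacked_intervals:
  assumes ps: "ps \<in> interval_chains m n n"
  shows "row_bounds m (stacked_intervals ps) = ps"
proof (rule nth_equalityI)
  have len: "length ps = m"
    using ps by (simp add: interval_chains_def)
  then show "length (row_bounds m (stacked_intervals ps)) = length ps"
    by simp
  fix i assume "i < length (row_bounds m (stacked_intervals ps))"
  then have i: "i < m" by simp
  have row: "stacked_intervals ps `` {Suc i} = {fst (ps ! i)..snd (ps ! i)}"
    using i len by (auto simp: stacked_intervals_def)
  have "fst (ps ! i) \<le> snd (ps ! i)"
    using interval_chains_nth[OF ps i] by simp
  then have "Min (stacked_intervals ps `` {Suc i}) = fst (ps ! i)"
    and "Max (stacked_intervals ps `` {Suc i}) = snd (ps ! i)"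
    unfolding row by (auto intro: Min_eqI Max_eqI)
  then show "row_bounds m (stacked_intervals ps) ! i = ps ! i"
    using i by (simp add: nth_row_bounds)
qed

lemma bij_betw_row_bounds: "bij_betw (row_bounds m) (row_full_ics m n) (interval_chains m n n)"
  by (rule bij_betw_byWitness[where f' = stacked_intervals])
    (auto simp: stacked_intervals_row_bounds row_bounds_stacked_intervals
      row_bounds_in_interval_chains stacked_intervals_in_row_full_ics)

lemma down_closed_eq_atLeastAtMost_card:
  fixes S :: "nat set"
  assumes "finite S" "0 \<notin> S" "\<And>x y. x \<in> S \<Longrightarrow> 1 \<le> y \<Longrightarrow> y \<le> x \<Longrightarrow> y \<in> S"
  shows "S = {1..card S}"
proof (cases "S = {}")
  case False
  have "S = {1..Max S}"
  proof
    show "S \<subseteq> {1..Max S}"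
      using assms(1,2) by (auto simp: Suc_le_eq intro: gr0I)
    show "{1..Max S} \<subseteq> S"
      using assms(3)[OF Max_in[OF assms(1) False]] by auto
  qed
  then show ?thesis
    by (metis card_atLeastAtMost diff_Suc_1)
qed simp

definition layer :: "(nat \<times> nat \<times> nat) set \<Rightarrow> nat \<Rightarrow> nat \<Rightarrow> nat set" where
  "layer J a c = {b. (a, b, c) \<in> J}"

definition ideal_bounds :: "nat \<Rightarrow> (nat \<times> nat \<times> nat) set \<Rightarrow> (nat \<times> nat) list" where
  "ideal_bounds m J = map (\<lambda>a. (card (layer J a 2) + 1, card (layer J a 1) + 1)) [1..<Suc m]"

definition chain_ideal :: "nat \<Rightarrow> (nat \<times> nat) list \<Rightarrow> (nat \<times> nat \<times> nat) set" where
  "chain_ideal k ps =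
     {(a, b, c) \<in> grid3 (length ps) k 2.
        b < (if c = 1 then snd (ps ! (a - 1)) else fst (ps ! (a - 1)))}"

lemma length_ideal_bounds [simp]: "length (ideal_bounds m J) = m"
  by (simp add: ideal_bounds_def del: upt_Suc)

lemma nth_ideal_bounds:
  "i < m \<Longrightarrow> ideal_bounds m J ! i = (card (layer J (Suc i) 2) + 1, card (layer J (Suc i) 1) + 1)"
  by (simp add: ideal_bounds_def del: upt_Suc)

lemma order_ideal_layer:
  assumes J: "order_ideal (grid3 m k 2) le3 J"
  shows "layer J a c \<subseteq> {1..k}" and "layer J a c = {1..card (layer J a c)}"
proof -
  show sub: "layer J a c \<subseteq> {1..k}"
    using J by (auto simp: order_ideal_def grid3_def layer_def)
  show "layer J a c = {1..card (layer J a c)}"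
  proof (rule down_closed_eq_atLeastAtMost_card)
    show "finite (layer J a c)"
      using sub by (rule finite_subset) simp
    show "0 \<notin> layer J a c"
      using sub by auto
    fix x y assume "x \<in> layer J a c" "1 \<le> y" "y \<le> x"
    moreover from this have "(a, x, c) \<in> grid3 m k 2"
      using J by (auto simp: order_ideal_def layer_def)
    ultimately show "y \<in> layer J a c"
      using J unfolding order_ideal_def layer_def by (auto simp: grid3_def le3_def)
  qed
qed

lemma order_ideal_layer_antimono:
  assumes J: "order_ideal (grid3 m k 2) le3 J" and "1 \<le> a'" "a' \<le> a" "1 \<le> c'" "c' \<le> c"
  shows "layer J a c \<subseteq> layer J a' c'"
proof
  fix b assume "b \<in> layer J a c"
  then have "(a, b, c) \<in> J" "(a, b, c) \<in> grid3 m k 2"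
    using J by (auto simp: order_ideal_def layer_def)
  moreover have "(a', b, c') \<in> grid3 m k 2"
    using calculation(2) assms(2-5) by (simp add: grid3_def)
  ultimately show "b \<in> layer J a' c'"
    using J assms(3,5) unfolding order_ideal_def layer_def by (auto simp: le3_def)
qed

lemma ideal_bounds_in_interval_chains:
  assumes J: "order_ideal (grid3 m k 2) le3 J"
  shows "ideal_bounds m J \<in> interval_chains m (k + 1) (k + 1)"
proof -
  have fin: "finite (layer J a c)" for a c
    using order_ideal_layer(1)[OF J] by (rule finite_subset) simp
  have card_le: "card (layer J a c) \<le> k" for a c
    using card_mono[OF _ order_ideal_layer(1)[OF J]] by simp
  show ?thesis
    unfolding ideal_bounds_def
  proof (rule map_upt_in_interval_chains, goal_cases)
    case (1 a)
    have "card (layer J a 2) \<le> card (layer J a 1)"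
      using card_mono[OF fin order_ideal_layer_antimono[OF J, of a a 1 2]] 1 by simp
    then show ?case
      using card_le[of a 1] card_le[of a 2] by simp
  next
    case (2 a a')
    then have "card (layer J a' c) \<le> card (layer J a c)" if "1 \<le> c" for c
      using card_mono[OF fin order_ideal_layer_antimono[OF J, of a a' c c]] that by simp
    then show ?case
      by (simp add: le2_def)
  qed
qed

lemma chain_ideal_is_order_ideal:
  assumes ps: "ps \<in> interval_chains m (k + 1) (k + 1)"
  shows "order_ideal (grid3 m k 2) le3 (chain_ideal k ps)"
proof -
  have len: "length ps = m"
    using ps by (simp add: interval_chains_def)
  define bound where
    "bound a c = (if c = 1 then snd (ps ! (a - 1)) else fst (ps ! (a - 1)))" for a c :: nat
  have bound_antimono: "bound a c \<le> bound a' c'"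
    if "a' \<in> {1..m}" "a \<in> {1..m}" "a' \<le> a" "c' \<in> {1..2}" "c \<in> {1..2}" "c' \<le> c" for a a' c c'
  proof -
    have "a' - 1 \<le> a - 1" "a - 1 < m"
      using that by auto
    then have "fst (ps ! (a - 1)) \<le> fst (ps ! (a' - 1))" "snd (ps ! (a - 1)) \<le> snd (ps ! (a' - 1))"
      and "fst (ps ! (a - 1)) \<le> snd (ps ! (a - 1))"
      using interval_chains_nth_antimono[OF ps] interval_chains_nth[OF ps] by auto
    then show ?thesis
      using that by (auto simp: bound_def)
  qed
  have "x \<in> chain_ideal k ps"
    if "y \<in> chain_ideal k ps" "x \<in> grid3 m k 2" "le3 x y" for x y
  proof -
    obtain a b c a' b' c' where xy: "y = (a, b, c)" "x = (a', b', c')"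
      by (metis prod_cases3)
    have "(a, b, c) \<in> grid3 m k 2" "b < bound a c"
      using that(1) unfolding xy chain_ideal_def bound_def len by auto
    moreover have "bound a c \<le> bound a' c'"
      using calculation(1) that(2,3) unfolding xy
      by (intro bound_antimono) (auto simp: grid3_def le3_def)
    ultimately show ?thesis
      using that(2,3) unfolding xy chain_ideal_def bound_def len by (auto simp: le3_def)
  qed
  then show ?thesis
    unfolding order_ideal_def chain_ideal_def len by blast
qed

lemma layer_chain_ideal:
  assumes ps: "ps \<in> interval_chains m (k + 1) (k + 1)" and a: "a \<in> {1..m}" and c: "c \<in> {1..2}"
  shows "card (layer (chain_ideal k ps) a c) + 1
           = (if c = 1 then snd (ps ! (a - 1)) else fst (ps ! (a - 1)))"
proof -
  have "a - 1 < m" using a by auto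
  note bound = interval_chains_nth[OF ps this]
  have "layer (chain_ideal k ps) a c
          = {1..<(if c = 1 then snd (ps ! (a - 1)) else fst (ps ! (a - 1)))}"
    using ps a c bound by (auto simp: layer_def chain_ideal_def grid3_def interval_chains_def)
  then show ?thesis
    using bound by simp
qed

lemma ideal_bounds_chain_ideal:
  assumes ps: "ps \<in> interval_chains m (k + 1) (k + 1)"
  shows "ideal_bounds m (chain_ideal k ps) = ps"
proof (rule nth_equalityI)
  show "length (ideal_bounds m (chain_ideal k ps)) = length ps"
    using ps by (simp add: interval_chains_def)
  fix i assume "i < length (ideal_bounds m (chain_ideal k ps))"
  then have "Suc i \<in> {1..m}" by simp
  then show "ideal_bounds m (chain_ideal k ps) ! i = ps ! i"
    using layer_chain_ideal[OF ps, of "Suc i" 1] layer_chain_ideal[OF ps, of "Suc i" 2]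
    by (simp add: nth_ideal_bounds)
qed

lemma chain_ideal_ideal_bounds:
  assumes J: "order_ideal (grid3 m k 2) le3 J"
  shows "chain_ideal k (ideal_bounds m J) = J"
proof (rule set_eqI)
  fix z :: "nat \<times> nat \<times> nat"
  obtain a b c where z: "z = (a, b, c)" by (metis prod_cases3)
  show "z \<in> chain_ideal k (ideal_bounds m J) \<longleftrightarrow> z \<in> J"
  proof (cases "z \<in> grid3 m k 2")
    case True
    then have "a - 1 < m" "Suc (a - 1) = a" "1 \<le> b" "c = 1 \<or> c = 2"
      unfolding z grid3_def by auto
    then have "z \<in> chain_ideal k (ideal_bounds m J) \<longleftrightarrow> b < card (layer J a c) + 1"
      using True unfolding z chain_ideal_def by (auto simp: nth_ideal_bounds)
    also have "\<dots> \<longleftrightarrow> b \<in> layer J a c"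
      using \<open>1 \<le> b\<close> order_ideal_layer(2)[OF J, of a c] by (metis atLeastAtMost_iff Suc_eq_plus1 less_Suc_eq_le)
    finally show ?thesis
      unfolding z layer_def by simp
  next
    case False
    then show ?thesis
      using J by (auto simp: chain_ideal_def order_ideal_def)
  qed
qed

lemma bij_betw_chain_ideal:
  "bij_betw (chain_ideal k) (interval_chains m (k + 1) (k + 1)) {J. order_ideal (grid3 m k 2) le3 J}"
proof (rule bij_betw_byWitness[where f' = "ideal_bounds m"])
  show "\<forall>ps \<in> interval_chains m (k + 1) (k + 1). ideal_bounds m (chain_ideal k ps) = ps"
    using ideal_bounds_chain_ideal by blast
  show "\<forall>J \<in> {J. order_ideal (grid3 m k 2) le3 J}. chain_ideal k (ideal_bounds m J) = J"
    using chain_ideal_ideal_bounds by blast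
  show "chain_ideal k ` interval_chains m (k + 1) (k + 1) \<subseteq> {J. order_ideal (grid3 m k 2) le3 J}"
    using chain_ideal_is_order_ideal by blast
  show "ideal_bounds m ` {J. order_ideal (grid3 m k 2) le3 J} \<subseteq> interval_chains m (k + 1) (k + 1)"
    using ideal_bounds_in_interval_chains by blast
qed

theorem theorem4p4:
  fixes m n :: nat
  assumes "m \<ge> 1" and "n \<ge> 2"
  shows "real (card (row_full_ics m n))
           = (1 / real n) * real ((n + m) choose (n - 1)) * real ((n + m - 1) choose (n - 1))
       \<and> real (card (row_full_ics m n)) = narayana (n + m) n
       \<and> card (row_full_ics m n) = card {J. order_ideal (grid3 m (n - 1) 2) le3 J}
       \<and> (\<exists>f. bij_betw f (row_full_ics m n) {J. order_ideal (grid3 m (n - 1) 2) le3 J})"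
proof -
  have n: "n - 1 + 1 = n" "1 \<le> n"
    using assms(2) by simp_all
  have bij: "bij_betw (chain_ideal (n - 1) \<circ> row_bounds m)
               (row_full_ics m n) {J. order_ideal (grid3 m (n - 1) 2) le3 J}"
    using bij_betw_trans[OF bij_betw_row_bounds bij_betw_chain_ideal[of "n - 1" m]] unfolding n(1) .
  have "int n * int (card (row_full_ics m n)) = int n * interval_chain_count m n n"
    using bij_betw_same_card[OF bij_betw_row_bounds] card_interval_chains[OF n(2) order_refl] by simp
  also have "\<dots> = int ((n + m) choose (n - 1)) * int ((n + m - 1) choose (n - 1))"
    using n(2) by (rule interval_chain_count_diagonal)
  finally have "real n * real (card (row_full_ics m n))
                  = real ((n + m) choose (n - 1)) * real ((n + m - 1) choose (n - 1))"
    by (metis of_int_of_nat_eq of_int_mult)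
  then have "real (card (row_full_ics m n))
              = (1 / real n) * real ((n + m) choose (n - 1)) * real ((n + m - 1) choose (n - 1))"
    using n(2) by (simp add: field_simps)
  then show ?thesis
    using bij bij_betw_same_card[OF bij] by (auto simp: narayana_def)
qed

end
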